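(* Let $\sqrt{2} = (1.b_1 b_2 b_3 \cdots)_2$ be the binary expansion of $\sqrt 2$. For integers $n \geq 2$, let $L_n(x) = \left\lfloor \frac{x(2^n - x)}{2^{n-2}} \right\rfloor$ for $x \in X_n = \{1, 2, \dots, 2^n - 1\}$, and call $n$ undesirable if there exists $x \in X_n$ with $L_n(x) = 2^{n-1}$. Then an integer $n \geq 2$ is undesirable if $$(0.b_{n-1} b_n b_{n+1} \cdots)_2 \leq (0.01 b_1 b_2 b_3 \cdots)_2 .$$
   Context: $(0.c_1c_2c_3\cdots)_2$ denotes the real number $\sum_{j \ge 1} c_j 2^{-j}$. *)

theory Defs
  imports Complex_Main
begin

definition binfrac :: "(nat \<Rightarrow> nat) \<Rightarrow> real" where
  "binfrac c = (\<Sum>j. real (c (Suc j)) / 2 ^ Suc j)"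

text \<open>Binary digits of sqrt 2 = (1.b_1 b_2 ...)_2 (unique since sqrt 2 is irrational).\<close>
definition sqrt2_digit :: "nat \<Rightarrow> nat" where
  "sqrt2_digit j = nat \<lfloor>sqrt 2 * 2 ^ j\<rfloor> mod 2"

definition L :: "nat \<Rightarrow> int \<Rightarrow> int" where
  "L n x = \<lfloor>real_of_int x * (2 ^ n - real_of_int x) / 2 ^ (n - 2)\<rfloor>"

definition undesirable :: "nat \<Rightarrow> bool" where
  "undesirable n \<longleftrightarrow> (\<exists>x \<in> {1 .. 2 ^ n - 1}. L n x = 2 ^ (n - 1))"

end

theory Submission
  imports Defs
begin

text \<open>Write \<open>a = 2^(n-2) sqrt 2\<close> and \<open>m = \<lfloor>a\<rfloor>\<close>. The left binary fraction of the hypothesis is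
  the fractional part \<open>f = a - m\<close>, the right one is \<open>sqrt 2 / 4\<close>. So \<open>2 a f \<le> 2^(n-2)\<close>, and
  \<open>m\<^sup>2 = a\<^sup>2 - 2 a f + f\<^sup>2\<close> lies in \<open>(2\<cdot>4^(n-2) - 2^(n-2), 2\<cdot>4^(n-2)]\<close>. For \<open>x = 2^(n-1) - m\<close> we have
  \<open>x (2^n - x) = 4^(n-1) - m\<^sup>2\<close>, and these bounds on \<open>m\<^sup>2\<close> are exactly what makes \<open>L\<^sub>n(x) = 2^(n-1)\<close>.\<close>

lemma floor_mult_2: "\<lfloor>2 * (y::real)\<rfloor> = 2 * \<lfloor>y\<rfloor> + \<lfloor>2 * y\<rfloor> mod 2"
proof -
  have "2 * \<lfloor>y\<rfloor> \<le> \<lfloor>2 * y\<rfloor>" by (simp add: le_floor_iff)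
  moreover have "2 * y < of_int (2 * \<lfloor>y\<rfloor> + 2)"
    using real_of_int_floor_add_one_gt[of y] by simp linarith
  then have "\<lfloor>2 * y\<rfloor> \<le> 2 * \<lfloor>y\<rfloor> + 1"
    using floor_less_iff[of "2 * y" "2 * \<lfloor>y\<rfloor> + 2"] by linarith
  ultimately show ?thesis by presburger
qed

lemma sum_binary_digits:
  fixes t :: real
  shows "(\<Sum>j<J. of_int (\<lfloor>t * 2 ^ Suc j\<rfloor> mod 2) / 2 ^ Suc j) = (\<lfloor>t * 2 ^ J\<rfloor> - 2 ^ J * \<lfloor>t\<rfloor>) / 2 ^ J"
proof (induction J)
  case 0
  then show ?case by simp
next
  case (Suc J)
  have "\<lfloor>t * 2 ^ Suc J\<rfloor> = 2 * \<lfloor>t * 2 ^ J\<rfloor> + \<lfloor>t * 2 ^ Suc J\<rfloor> mod 2"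
    using floor_mult_2[of "t * 2 ^ J"] by (simp add: mult_ac)
  then show ?case
    using Suc by (simp add: field_simps flip: of_int_add of_int_mult)
qed

lemma binary_digits_sums_frac:
  fixes t :: real
  shows "(\<lambda>j. of_int (\<lfloor>t * 2 ^ Suc j\<rfloor> mod 2) / 2 ^ Suc j) sums frac t"
proof -
  define e where "e J = frac (t * 2 ^ J) / 2 ^ J" for J
  have partial_sums: "(\<Sum>j<J. of_int (\<lfloor>t * 2 ^ Suc j\<rfloor> mod 2) / 2 ^ Suc j) = frac t - e J" for J
    unfolding sum_binary_digits e_def frac_def by (simp add: field_simps)
  have "e \<longlonglongrightarrow> 0"
  proof (rule tendsto_sandwich[of "\<lambda>_. 0" _ _ "\<lambda>J. (1 / 2) ^ J"])
    show "\<forall>\<^sub>F J in sequentially. 0 \<le> e J"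
      by (simp add: e_def frac_ge_0)
    have "e J \<le> (1 / 2) ^ J" for J
      unfolding e_def power_one_over using frac_lt_1[of "t * 2 ^ J"] by (simp add: divide_right_mono)
    then show "\<forall>\<^sub>F J in sequentially. e J \<le> (1 / 2) ^ J"
      by simp
  qed (simp_all add: LIMSEQ_power_zero)
  then show ?thesis
    unfolding sums_def partial_sums using tendsto_diff[OF tendsto_const[of "frac t"], of e 0] by simp
qed

lemma binfrac_floor_digits:
  fixes t :: real
  assumes "t \<ge> 0"
  shows "binfrac (\<lambda>j. nat \<lfloor>t * 2 ^ j\<rfloor> mod 2) = frac t"
proof -
  have digit: "real (nat \<lfloor>t * 2 ^ j\<rfloor> mod 2) = of_int (\<lfloor>t * 2 ^ j\<rfloor> mod 2)" for j
  proof -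
    have "0 \<le> \<lfloor>t * 2 ^ j\<rfloor>" using assms by simp
    then have "nat \<lfloor>t * 2 ^ j\<rfloor> mod 2 = nat (\<lfloor>t * 2 ^ j\<rfloor> mod 2)" by (simp add: nat_mod_distrib)
    then show ?thesis by simp
  qed
  show ?thesis
    unfolding binfrac_def digit by (rule sums_unique[OF binary_digits_sums_frac, symmetric])
qed

lemma binfrac_shift_sqrt2_digit: "binfrac (\<lambda>j. sqrt2_digit (k + j)) = frac (sqrt 2 * 2 ^ k)"
  using binfrac_floor_digits[of "sqrt 2 * 2 ^ k"]
  by (simp add: sqrt2_digit_def power_add mult.assoc)

lemma summable_binary_digits:
  assumes "\<And>j. c j \<le> 1"
  shows "summable (\<lambda>j. real (c (Suc j)) / 2 ^ Suc j)"
proof (rule summable_comparison_test[of _ "\<lambda>j. (1 / 2) ^ Suc j"])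
  show "\<exists>N. \<forall>j\<ge>N. norm (real (c (Suc j)) / 2 ^ Suc j) \<le> (1 / 2) ^ Suc j"
    using assms by (auto simp: power_one_over divide_right_mono)
qed simp

lemma binfrac_shift2:
  assumes "\<And>j. c j \<le> 1"
  shows "binfrac c = real (c 1) / 2 + real (c 2) / 4 + binfrac (\<lambda>j. c (j + 2)) / 4"
proof -
  define f where "f j = real (c (Suc j)) / 2 ^ Suc j" for j
  have "summable f"
    unfolding f_def by (rule summable_binary_digits) fact
  then have "binfrac c = (\<Sum>j. f (j + 2)) + f 0 + f 1"
    unfolding binfrac_def f_def[symmetric]
    by (simp add: suminf_split_initial_segment[of f 2] numeral_2_eq_2)
  moreover have "(\<lambda>j. f (j + 2)) sums (binfrac (\<lambda>j. c (j + 2)) / 4)"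
  proof -
    have "summable (\<lambda>j. real (c (Suc j + 2)) / 2 ^ Suc j)"
      using summable_binary_digits[of "\<lambda>j. c (j + 2)"] assms by simp
    then have "(\<lambda>j. real (c (Suc j + 2)) / 2 ^ Suc j / 4) sums (binfrac (\<lambda>j. c (j + 2)) / 4)"
      unfolding binfrac_def by (intro sums_divide summable_sums)
    moreover have "(\<lambda>j. f (j + 2)) = (\<lambda>j. real (c (Suc j + 2)) / 2 ^ Suc j / 4)"
      by (simp add: f_def field_simps)
    ultimately show ?thesis by simp
  qed
  ultimately show ?thesis
    by (simp add: f_def numeral_2_eq_2 sums_unique[symmetric])
qed

lemma floor_sqrt2: "\<lfloor>sqrt 2\<rfloor> = 1"
  using real_less_lsqrt[of 2 2] by (simp add: floor_eq_iff)

lemma binfrac_01_sqrt2_digits: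
  "binfrac (\<lambda>j. if j = 1 then 0 else if j = 2 then 1 else sqrt2_digit (j - 2)) = sqrt 2 / 4"
proof -
  define c where "c = (\<lambda>j::nat. if j = 1 then 0 else if j = 2 then 1 else sqrt2_digit (j - 2))"
  have "c j \<le> 1" for j
    by (auto simp: c_def sqrt2_digit_def less_Suc_eq_le[symmetric])
  then have "binfrac c = real (c 1) / 2 + real (c 2) / 4 + binfrac (\<lambda>j. c (j + 2)) / 4"
    by (rule binfrac_shift2)
  also have "binfrac (\<lambda>j. c (j + 2)) = binfrac (\<lambda>j. sqrt2_digit (0 + j))"
    unfolding binfrac_def c_def by simp
  also have "\<dots> = sqrt 2 - 1"
    using binfrac_shift_sqrt2_digit[of 0] floor_sqrt2 by (simp add: frac_def)
  finally have "binfrac c = 1 / 4 + (sqrt 2 - 1) / 4"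
    by (simp add: c_def)
  then show ?thesis
    unfolding c_def[symmetric] by (simp add: field_simps)
qed

lemma floor_sqrt2_mult_square_bounds:
  fixes P :: real
  assumes "P > 0" and frac_le: "frac (sqrt 2 * P) \<le> sqrt 2 / 4"
  shows "2 * P\<^sup>2 - P < (of_int \<lfloor>sqrt 2 * P\<rfloor>)\<^sup>2" and "(of_int \<lfloor>sqrt 2 * P\<rfloor>)\<^sup>2 \<le> 2 * P\<^sup>2"
proof -
  define a where "a = sqrt 2 * P"
  define f where "f = frac a"
  have a_sq: "a\<^sup>2 = 2 * P\<^sup>2" and "a > 0"
    unfolding a_def using assms(1) by (simp_all add: power_mult_distrib)
  have "2 * a * f \<le> 2 * a * (sqrt 2 / 4)"
    using frac_le \<open>a > 0\<close> unfolding f_def a_def by (intro mult_left_mono) auto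
  also have "\<dots> = P"
    unfolding a_def by (simp add: field_simps)
  finally have cross: "2 * a * f \<le> P" .
  have floor_sq: "(of_int \<lfloor>a\<rfloor>)\<^sup>2 = a\<^sup>2 - 2 * a * f + f\<^sup>2"
    unfolding f_def frac_def by (simp add: power2_eq_square algebra_simps)
  have "2 * P\<^sup>2 - P < (of_int \<lfloor>a\<rfloor>)\<^sup>2"
  proof (cases "f = 0")
    case True
    then show ?thesis using floor_sq a_sq assms(1) by simp
  next
    case False
    then have "f\<^sup>2 > 0" by simp
    then show ?thesis using floor_sq a_sq cross by linarith
  qed
  moreover have "(of_int \<lfloor>a\<rfloor>)\<^sup>2 \<le> a\<^sup>2"
    using \<open>a > 0\<close> by (intro power_mono) auto
  ultimately show "2 * P\<^sup>2 - P < (of_int \<lfloor>sqrt 2 * P\<rfloor>)\<^sup>2" "(of_int \<lfloor>sqrt 2 * P\<rfloor>)\<^sup>2 \<le> 2 * P\<^sup>2"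
    using a_sq by (simp_all add: a_def)
qed

lemma undesirable_if_near_square:
  fixes m :: int
  assumes "m \<ge> 0" and lower: "2 * 4 ^ k - 2 ^ k < m\<^sup>2" and upper: "m\<^sup>2 \<le> 2 * 4 ^ k"
  shows "undesirable (k + 2)"
proof -
  define P :: int where "P = 2 ^ k"
  have "P \<ge> 1" and four_pow: "(4::int) ^ k = P\<^sup>2"
    by (simp_all add: P_def power2_eq_square flip: power_mult_distrib)
  have "m < 2 * P"
  proof (rule ccontr)
    assume "\<not> m < 2 * P"
    then have "(2 * P)\<^sup>2 \<le> m\<^sup>2" using \<open>P \<ge> 1\<close> by (intro power_mono) auto
    moreover have "0 < P\<^sup>2" using \<open>P \<ge> 1\<close> by simp
    ultimately show False using upper four_pow by (simp add: power_mult_distrib)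
  qed
  define x where "x = 2 * P - m"
  have "x \<in> {1 .. 2 ^ (k + 2) - 1}"
    using \<open>m \<ge> 0\<close> \<open>m < 2 * P\<close> \<open>P \<ge> 1\<close> by (simp add: x_def P_def)
  moreover have "L (k + 2) x = 2 ^ (k + 1)"
  proof -
    have L_value: "real_of_int x * (2 ^ (k + 2) - real_of_int x) / 2 ^ (k + 2 - 2)
        = of_int (4 * P\<^sup>2 - m\<^sup>2) / of_int P"
      by (simp add: x_def P_def power2_eq_square algebra_simps)
    have "(4 * P\<^sup>2 - m\<^sup>2) div P = 2 * P"
      using lower upper four_pow
      by (intro int_div_pos_eq[of _ _ _ "2 * P\<^sup>2 - m\<^sup>2"]) (auto simp: P_def power2_eq_square)
    then show ?thesis
      unfolding L_def L_value floor_divide_of_int_eq by (simp add: P_def)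
  qed
  ultimately show ?thesis
    unfolding undesirable_def by auto
qed

theorem lemma2p3:
  fixes n :: nat
  assumes "n \<ge> 2"
    and "binfrac (\<lambda>j. sqrt2_digit (n - 2 + j))
         \<le> binfrac (\<lambda>j. if j = 1 then 0 else if j = 2 then 1 else sqrt2_digit (j - 2))"
  shows "undesirable n"
proof -
  define k where "k = n - 2"
  have n: "n = k + 2"
    using assms(1) by (simp add: k_def)
  define m where "m = \<lfloor>sqrt 2 * 2 ^ k\<rfloor>"
  have "frac (sqrt 2 * 2 ^ k) \<le> sqrt 2 / 4"
    using assms(2) unfolding k_def binfrac_shift_sqrt2_digit binfrac_01_sqrt2_digits .
  moreover have "((2::real) ^ k)\<^sup>2 = 4 ^ k"
    by (simp add: power2_eq_square flip: power_mult_distrib)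
  ultimately have "real_of_int (2 * 4 ^ k - 2 ^ k) < of_int (m\<^sup>2)" "real_of_int (m\<^sup>2) \<le> of_int (2 * 4 ^ k)"
    using floor_sqrt2_mult_square_bounds[of "2 ^ k"] unfolding m_def by simp_all
  then have "2 * 4 ^ k - 2 ^ k < m\<^sup>2" "m\<^sup>2 \<le> 2 * 4 ^ k"
    by (simp_all only: of_int_less_iff of_int_le_iff)
  moreover have "m \<ge> 0"
    by (simp add: m_def)
  ultimately have "undesirable (k + 2)"
    by (rule undesirable_if_near_square[rotated])
  then show ?thesis
    unfolding n .
qed

end
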